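(* Let $\mathbb G=V_1\times V_2$ be a step-two Carnot group of Métivier's type, i.e. for every $x\in V_1\setminus\{0\}$ the map $x'\in V_1\mapsto[x,x']\in V_2$ is surjective. Then $\mathcal A_h(\mathbb G)=\mathcal A(V_1\times V_2)$.
   Context: A step-two Carnot group is $\mathbb G=V_1\times V_2$ ($V_1,V_2$ finite-dimensional real vector spaces, $V_2\ne\{0\}$) with a bilinear skew-symmetric $[\cdot,\cdot]:V_1\times V_1\to V_2$ whose image spans $V_2$, and group law $(x,z)\cdot(x',z')=(x+x',z+z'+[x,x'])$. $\mathcal A_h(\mathbb G)$ is the space of maps $f:\mathbb G\to\mathbb R$ such that for all $(x,z)\in\mathbb G$, $y\in V_1$, $t\mapsto f((x,z)\cdot(ty,0))$ is affine; $\mathcal A(V_1\times V_2)$ is the space of maps affine in the usual sense on $V_1\times V_2$. *)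

theory Defs
  imports "HOL-Analysis.Analysis"
begin

definition carnot_mult ::
  "('a::real_vector \<Rightarrow> 'a \<Rightarrow> 'b::real_vector) \<Rightarrow> 'a \<times> 'b \<Rightarrow> 'a \<times> 'b \<Rightarrow> 'a \<times> 'b" where
  "carnot_mult br p q = (fst p + fst q, snd p + snd q + br (fst p) (fst q))"

text \<open>Structure assumptions of a step-two Carnot group (V2 nontrivial is automatic
  for a euclidean_space type).\<close>
definition step_two_bracket ::
  "('a::euclidean_space \<Rightarrow> 'a \<Rightarrow> 'b::euclidean_space) \<Rightarrow> bool" where
  "step_two_bracket br \<longleftrightarrow> bilinear br \<and> (\<forall>x y. br x y = - br y x)
     \<and> span (range (\<lambda>(x, y). br x y)) = UNIV"

definition metivier_type :: "('a::euclidean_space \<Rightarrow> 'a \<Rightarrow> 'b::euclidean_space) \<Rightarrow> bool" where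
  "metivier_type br \<longleftrightarrow> (\<forall>x. x \<noteq> 0 \<longrightarrow> surj (br x))"

definition horiz_affine ::
  "('a::euclidean_space \<Rightarrow> 'a \<Rightarrow> 'b::euclidean_space) \<Rightarrow> ('a \<times> 'b \<Rightarrow> real) set" where
  "horiz_affine br = {f. \<forall>p y. \<exists>a b. \<forall>t::real.
      f (carnot_mult br p (t *\<^sub>R y, 0)) = a * t + b}"

definition affine_maps :: "('v::real_vector \<Rightarrow> real) set" where
  "affine_maps = {f. \<exists>l c. linear l \<and> (\<forall>v. f v = l v + c)}"

end

theory Submission
  imports Defs
begin

text \<open>Write f(x, z) = f(x, 0) + V z + M x z, where M x z = f(x, z) - f(x, 0) - f(0, z) + f(0, 0).
  Since every vertical vector is a bracket [b, e] with e fixed, each point of a vertical line is the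
  midpoint of a horizontal segment whose endpoints move along horizontal lines; so f is affine on
  vertical lines, V and M x are linear, and horizontal lines then make M linear in x as well.
  On the horizontal line through (x, 0) in direction y, the second difference of f(-, 0) with
  step y equals -2 M y [x, y]. As f(-, 0) is affine on lines through the origin, this second
  difference scales linearly under (x, y) \<mapsto> (2x, 2y), whereas M y [x, y] scales cubically;
  hence M y [x, y] = 0, and M = 0 by the Metivier condition. Then f(-, 0) is affine along every
  line and f is affine.\<close>

definition affine_fn :: "(real \<Rightarrow> real) \<Rightarrow> bool" where
  "affine_fn \<phi> \<longleftrightarrow> (\<exists>a b. \<forall>t. \<phi> t = a * t + b)"

lemma affine_fnD: "affine_fn \<phi> \<Longrightarrow> \<phi> t = \<phi> 0 + t * (\<phi> 1 - \<phi> 0)"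
  by (auto simp: affine_fn_def algebra_simps)

lemma affine_fn_midpoint: "affine_fn \<phi> \<Longrightarrow> \<phi> (s - h) + \<phi> (s + h) = 2 * \<phi> s"
  unfolding affine_fn_def by (clarsimp simp: algebra_simps)

lemma affine_fn_linear: "affine_fn (\<lambda>t. c * t)"
  unfolding affine_fn_def by (intro exI[of _ c] exI[of _ 0]) simp

lemma affine_fn_lin_comb:
  assumes "affine_fn \<phi>" and "affine_fn \<psi>"
  shows "affine_fn (\<lambda>t. c * \<phi> t + d * \<psi> t)"
proof -
  from assms obtain a b a' b' where "\<And>t. \<phi> t = a * t + b" "\<And>t. \<psi> t = a' * t + b'"
    unfolding affine_fn_def by metis
  then have "c * \<phi> t + d * \<psi> t = (c * a + d * a') * t + (c * b + d * b')" for t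
    by (simp add: algebra_simps)
  then show ?thesis
    unfolding affine_fn_def by blast
qed

lemma affine_fn_diff: "affine_fn \<phi> \<Longrightarrow> affine_fn \<psi> \<Longrightarrow> affine_fn (\<lambda>t. \<phi> t - \<psi> t)"
  using affine_fn_lin_comb[of \<phi> \<psi> 1 "- 1"] by simp

lemma linear_if_affine_fn_on_lines:
  fixes g :: "'v::real_vector \<Rightarrow> real"
  assumes affine: "\<And>p v. affine_fn (\<lambda>t. g (p + t *\<^sub>R v))"
  shows "linear (\<lambda>v. g v - g 0)"
proof (rule linearI)
  have scale: "g (t *\<^sub>R v) - g 0 = t * (g v - g 0)" for t v
    using affine_fnD[OF affine[of 0 v], of t] by simp
  fix u v :: 'v
  have "g (2 *\<^sub>R u + (1 - 1) *\<^sub>R (v - u)) + g (2 *\<^sub>R u + (1 + 1) *\<^sub>R (v - u))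
      = 2 * g (2 *\<^sub>R u + 1 *\<^sub>R (v - u))"
    by (rule affine_fn_midpoint[OF affine])
  moreover have "2 *\<^sub>R u + (1 - 1) *\<^sub>R (v - u) = 2 *\<^sub>R u"
    "2 *\<^sub>R u + (1 + 1) *\<^sub>R (v - u) = 2 *\<^sub>R v" "2 *\<^sub>R u + 1 *\<^sub>R (v - u) = u + v"
    by (simp_all add: algebra_simps scaleR_2)
  ultimately have "g (2 *\<^sub>R u) + g (2 *\<^sub>R v) = 2 * g (u + v)"
    by (simp only:)
  with scale[of 2 u] scale[of 2 v]
  show "g (u + v) - g 0 = (g u - g 0) + (g v - g 0)" by simp
  show "g (t *\<^sub>R v) - g 0 = t *\<^sub>R (g v - g 0)" for t
    using scale by simp
qed

lemma carnot_mult_horizontal: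
  assumes "bilinear br"
  shows "carnot_mult br (x, z) (t *\<^sub>R y, 0) = (x + t *\<^sub>R y, z + t *\<^sub>R br x y)"
  by (simp add: carnot_mult_def bilinear_rmul[OF assms])

lemma horiz_affine_iff:
  assumes "bilinear br"
  shows "f \<in> horiz_affine br \<longleftrightarrow>
    (\<forall>x z y. affine_fn (\<lambda>t. f (x + t *\<^sub>R y, z + t *\<^sub>R br x y)))"
  by (simp add: horiz_affine_def affine_fn_def carnot_mult_horizontal[OF assms] split_paired_All)

lemma affine_maps_subset_horiz_affine:
  assumes bil: "bilinear br"
  shows "affine_maps \<subseteq> horiz_affine br"
proof
  fix f :: "'a \<times> 'b \<Rightarrow> real"
  assume "f \<in> affine_maps"
  then obtain l c where l: "linear l" and f: "\<And>v. f v = l v + c"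
    unfolding affine_maps_def by auto
  have "f (x + t *\<^sub>R y, z + t *\<^sub>R br x y) = l (y, br x y) * t + (l (x, z) + c)" for x z y t
    using linear_add[OF l, of "(x, z)" "t *\<^sub>R (y, br x y)"] linear_scale[OF l, of t "(y, br x y)"]
    by (simp add: f)
  then show "f \<in> horiz_affine br"
    unfolding horiz_affine_iff[OF bil] affine_fn_def by blast
qed

lemma surj_bracket_left:
  assumes "step_two_bracket br" and "metivier_type br" and "y \<noteq> 0"
  shows "surj (\<lambda>x. br x y)"
proof -
  have antisym: "br x y = - br y x" for x
    using assms(1) unfolding step_two_bracket_def by blast
  have "w \<in> range (\<lambda>x. br x y)" for w
  proof -
    from assms(2,3) obtain x where "br y x = - w"
      unfolding metivier_type_def by (metis surjD)
    then show ?thesis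
      using antisym[of x] by auto
  qed
  then show ?thesis by blast
qed

locale metivier_horizontally_affine =
  fixes br :: "'a::euclidean_space \<Rightarrow> 'a \<Rightarrow> 'b::real_vector" and f :: "'a \<times> 'b \<Rightarrow> real"
  assumes bilinear: "bilinear br"
    and surj_bracket: "y \<noteq> 0 \<Longrightarrow> surj (\<lambda>x. br x y)"
    and affine_fn_horizontal: "affine_fn (\<lambda>t. f (x + t *\<^sub>R y, z + t *\<^sub>R br x y))"
begin

lemmas bracket_simps = bilinear_ladd[OF bilinear] bilinear_radd[OF bilinear]
  bilinear_lmul[OF bilinear] bilinear_rmul[OF bilinear] bilinear_lneg[OF bilinear]
  bilinear_rneg[OF bilinear] bilinear_lsub[OF bilinear] bilinear_rsub[OF bilinear]
  bilinear_lzero[OF bilinear] bilinear_rzero[OF bilinear]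

lemma affine_fn_vertical: "affine_fn (\<lambda>r. f (x, z + r *\<^sub>R w))"
proof -
  obtain e :: 'a where "e \<noteq> 0" using nonzero_Basis nonempty_Basis by blast
  then obtain b where b: "br b e = w" using surj_bracket by (metis surjD)
  define P where "P r = f ((x + b) + r *\<^sub>R e, (z + br x b) + r *\<^sub>R br (x + b) e)" for r
  define Q where "Q r = f ((x - b) + r *\<^sub>R (- e), (z - br x b) + r *\<^sub>R br (x - b) (- e))" for r
  \<comment> \<open>(x, z + r w) is the midpoint of the horizontal segment through it in direction b + r e,
    whose endpoints run along the horizontal lines P and Q.\<close>
  have "Q r + P r = 2 * f (x, z + r *\<^sub>R w)" for r
  proof -
    have "x + (0 - 1) *\<^sub>R (b + r *\<^sub>R e) = (x - b) + r *\<^sub>R (- e)"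
      "x + (0 + 1) *\<^sub>R (b + r *\<^sub>R e) = (x + b) + r *\<^sub>R e"
      "x + 0 *\<^sub>R (b + r *\<^sub>R e) = x"
      by (simp_all add: algebra_simps)
    moreover have "(z + r *\<^sub>R w) + (0 - 1) *\<^sub>R br x (b + r *\<^sub>R e)
        = (z - br x b) + r *\<^sub>R br (x - b) (- e)"
      "(z + r *\<^sub>R w) + (0 + 1) *\<^sub>R br x (b + r *\<^sub>R e)
        = (z + br x b) + r *\<^sub>R br (x + b) e"
      "(z + r *\<^sub>R w) + 0 *\<^sub>R br x (b + r *\<^sub>R e) = z + r *\<^sub>R w"
      by (simp_all add: bracket_simps b algebra_simps)
    ultimately show ?thesis
      using affine_fn_midpoint[OF affine_fn_horizontal[of x "b + r *\<^sub>R e" "z + r *\<^sub>R w"], of 0 1]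
      unfolding P_def Q_def by (simp only:)
  qed
  then have "(\<lambda>r. f (x, z + r *\<^sub>R w)) = (\<lambda>r. 1/2 * Q r + 1/2 * P r)"
    by (intro ext) (simp add: field_simps)
  moreover have "affine_fn P" "affine_fn Q"
    unfolding P_def Q_def by (rule affine_fn_horizontal)+
  ultimately show ?thesis
    by (simp only: affine_fn_lin_comb)
qed

lemma linear_vertical: "linear (\<lambda>z. f (x, z) - f (x, 0))"
  using linear_if_affine_fn_on_lines[of "\<lambda>z. f (x, z)"] affine_fn_vertical by simp

definition mixed :: "'a \<Rightarrow> 'b \<Rightarrow> real" where
  "mixed x z = f (x, z) - f (x, 0) - f (0, z) + f (0, 0)"

lemma f_decomp: "f (x, z) = f (x, 0) + (f (0, z) - f (0, 0)) + mixed x z"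
  by (simp add: mixed_def)

lemma linear_mixed_right: "linear (mixed x)"
proof -
  have "linear (\<lambda>z. (f (x, z) - f (x, 0)) - (f (0, z) - f (0, 0)))"
    using linear_vertical linear_compose_sub by blast
  then show ?thesis by (simp add: mixed_def[abs_def] algebra_simps)
qed

lemma linear_mixed_left: "linear (\<lambda>x. mixed x z)"
proof -
  have "affine_fn (\<lambda>r. f (x + r *\<^sub>R y, z) - f (x + r *\<^sub>R y, 0))" for x y
  proof -
    have "f (x + r *\<^sub>R y, z) - f (x + r *\<^sub>R y, 0)
      = f (x + r *\<^sub>R y, z + r *\<^sub>R br x y) - f (x + r *\<^sub>R y, 0 + r *\<^sub>R br x y)" for r
      using linear_add[OF linear_vertical[of "x + r *\<^sub>R y"], of z "r *\<^sub>R br x y"] by simp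
    then show ?thesis
      using affine_fn_diff[OF affine_fn_horizontal[of x y z] affine_fn_horizontal[of x y 0]] by simp
  qed
  from linear_if_affine_fn_on_lines[OF this] show ?thesis
    by (simp add: mixed_def algebra_simps)
qed

lemma bilinear_mixed: "bilinear mixed"
  using linear_mixed_left linear_mixed_right by (simp add: bilinear_def)

lemma f_scale_base: "f (t *\<^sub>R y, 0) = f (0, 0) + t * (f (y, 0) - f (0, 0))"
  using affine_fnD[OF affine_fn_horizontal[of 0 y 0]] by (simp add: bracket_simps)

lemma second_difference_base:
  "f (x - y, 0) + f (x + y, 0) - 2 * f (x, 0) = - 2 * mixed y (br x y)"
proof -
  have "f (x - y, - br x y) + f (x + y, br x y) = 2 * f (x, 0)"
    using affine_fn_midpoint[OF affine_fn_horizontal[of x y 0], of 0 1] by simp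
  moreover have "mixed (x + y) (br x y) - mixed (x - y) (br x y) = 2 * mixed y (br x y)"
    by (simp add: bilinear_ladd[OF bilinear_mixed] bilinear_lsub[OF bilinear_mixed])
  ultimately show ?thesis
    using f_decomp[of "x - y" "- br x y"] f_decomp[of "x + y" "br x y"]
      linear_neg[OF linear_vertical[of 0], of "br x y"]
      bilinear_rneg[OF bilinear_mixed, of "x - y" "br x y"]
    by simp
qed

lemma mixed_bracket_eq_0: "mixed y (br x y) = 0"
proof -
  have "mixed (2 *\<^sub>R y) (br (2 *\<^sub>R x) (2 *\<^sub>R y)) = 8 * mixed y (br x y)"
    by (simp add: bracket_simps bilinear_lmul[OF bilinear_mixed] bilinear_rmul[OF bilinear_mixed])
  moreover have "f (2 *\<^sub>R x - 2 *\<^sub>R y, 0) = 2 * f (x - y, 0) - f (0, 0)"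
    "f (2 *\<^sub>R x + 2 *\<^sub>R y, 0) = 2 * f (x + y, 0) - f (0, 0)"
    "f (2 *\<^sub>R x, 0) = 2 * f (x, 0) - f (0, 0)"
    using f_scale_base[of 2 "x - y"] f_scale_base[of 2 "x + y"] f_scale_base[of 2 x]
    by (simp_all add: scaleR_diff_right scaleR_add_right)
  ultimately have "2 * (f (x - y, 0) + f (x + y, 0) - 2 * f (x, 0)) = - 16 * mixed y (br x y)"
    using second_difference_base[of "2 *\<^sub>R x" "2 *\<^sub>R y"] by simp
  with second_difference_base[of x y] show ?thesis by simp
qed

lemma mixed_eq_0: "mixed y z = 0"
proof (cases "y = 0")
  case True
  then show ?thesis by (simp add: mixed_def)
next
  case False
  then obtain x where "z = br x y" using surj_bracket by (metis surjD)
  then show ?thesis by (simp add: mixed_bracket_eq_0)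
qed

lemma affine_fn_base: "affine_fn (\<lambda>t. f (x + t *\<^sub>R y, 0))"
proof -
  have "f (x + t *\<^sub>R y, 0)
      = f (x + t *\<^sub>R y, 0 + t *\<^sub>R br x y) - (f (0, br x y) - f (0, 0)) * t" for t
    using f_decomp[of "x + t *\<^sub>R y" "t *\<^sub>R br x y"] linear_scale[OF linear_vertical[of 0]]
    by (simp add: mixed_eq_0 algebra_simps)
  then show ?thesis
    using affine_fn_diff[OF affine_fn_horizontal[of x y 0] affine_fn_linear] by simp
qed

lemma in_affine_maps: "f \<in> affine_maps"
proof -
  have "linear (\<lambda>x. f (x, 0) - f (0, 0))"
    using linear_if_affine_fn_on_lines[of "\<lambda>x. f (x, 0)"] affine_fn_base by simp
  then have "linear (\<lambda>p. (f (fst p, 0) - f (0, 0)) + (f (0, snd p) - f (0, 0)))"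
    using linear_compose[OF linear_fst] linear_compose[OF linear_snd] linear_vertical[of 0]
    by (intro linear_compose_add) (auto simp: o_def)
  moreover have "f p = (f (fst p, 0) - f (0, 0)) + (f (0, snd p) - f (0, 0)) + f (0, 0)" for p
    using f_decomp[of "fst p" "snd p"] by (simp add: mixed_eq_0)
  ultimately show ?thesis
    unfolding affine_maps_def by blast
qed

end

theorem proposition6p1:
  fixes br :: "'a::euclidean_space \<Rightarrow> 'a \<Rightarrow> 'b::euclidean_space"
  assumes "step_two_bracket br"
    and "metivier_type br"
  shows "horiz_affine br = (affine_maps :: ('a \<times> 'b \<Rightarrow> real) set)"
proof
  have bil: "bilinear br"
    using assms(1) unfolding step_two_bracket_def by blast
  show "affine_maps \<subseteq> horiz_affine br"
    using affine_maps_subset_horiz_affine[OF bil] .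
  show "horiz_affine br \<subseteq> affine_maps"
  proof
    fix f :: "'a \<times> 'b \<Rightarrow> real"
    assume "f \<in> horiz_affine br"
    then interpret metivier_horizontally_affine br f
      using bil surj_bracket_left[OF assms] by unfold_locales (simp_all add: horiz_affine_iff)
    show "f \<in> affine_maps" by (rule in_affine_maps)
  qed
qed

end
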